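(* Let $n\ge 6$ and let $G$ be a simple graph on $n$ vertices that contains no cycle having two chords incident to a common vertex. Then $|E(G)|\le 3n-9$. Moreover, if $G$ is bipartite, then $|E(G)|=3n-9$ if and only if $G\cong K_{3,n-3}$.
   Context: For a cycle $C$ in $G$, a chord is an edge of $G$ joining two vertices of $C$ that is not an edge of $C$. $K_{3,n-3}$ is the complete bipartite graph with parts of sizes $3$ and $n-3$. *)

theory Defs
  imports Main
begin

definition simple_graph :: "'a set \<Rightarrow> 'a set set \<Rightarrow> bool" where
  "simple_graph V E \<longleftrightarrow> finite V \<and> (\<forall>e\<in>E. e \<subseteq> V \<and> card e = 2)"

definition cycle_edges :: "'a list \<Rightarrow> 'a set set" where
  "cycle_edges cs = {{cs ! i, cs ! ((i + 1) mod length cs)} | i. i < length cs}"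

definition is_cycle :: "'a set \<Rightarrow> 'a set set \<Rightarrow> 'a list \<Rightarrow> bool" where
  "is_cycle V E cs \<longleftrightarrow> length cs \<ge> 3 \<and> distinct cs \<and> set cs \<subseteq> V \<and>
     cycle_edges cs \<subseteq> E"

definition is_chord :: "'a set set \<Rightarrow> 'a list \<Rightarrow> 'a set \<Rightarrow> bool" where
  "is_chord E cs e \<longleftrightarrow> e \<in> E \<and> e \<subseteq> set cs \<and> e \<notin> cycle_edges cs"

definition has_cycle_two_adjacent_chords :: "'a set \<Rightarrow> 'a set set \<Rightarrow> bool" where
  "has_cycle_two_adjacent_chords V E \<longleftrightarrow>
     (\<exists>cs e1 e2 v. is_cycle V E cs \<and> is_chord E cs e1 \<and> is_chord E cs e2 \<and>
        e1 \<noteq> e2 \<and> v \<in> e1 \<and> v \<in> e2)"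

definition bipartite :: "'a set \<Rightarrow> 'a set set \<Rightarrow> bool" where
  "bipartite V E \<longleftrightarrow> (\<exists>A B. A \<union> B = V \<and> A \<inter> B = {} \<and>
     (\<forall>e\<in>E. \<exists>a\<in>A. \<exists>b\<in>B. e = {a, b}))"

definition graph_iso :: "'a set \<Rightarrow> 'a set set \<Rightarrow> 'b set \<Rightarrow> 'b set set \<Rightarrow> bool" where
  "graph_iso V E V' E' \<longleftrightarrow> (\<exists>f. bij_betw f V V' \<and>
     (\<forall>u\<in>V. \<forall>v\<in>V. {u, v} \<in> E \<longleftrightarrow> {f u, f v} \<in> E'))"

definition Kbip_V :: "nat \<Rightarrow> nat \<Rightarrow> nat set" where
  "Kbip_V p q = {0..<p + q}"

definition Kbip_E :: "nat \<Rightarrow> nat \<Rightarrow> nat set set" where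
  "Kbip_E p q = {{i, j} | i j. i < p \<and> p \<le> j \<and> j < p + q}"

end

theory Submission
  imports Defs
begin

(* A graph in which no cycle has two chords at a common vertex has a vertex of degree at most 3:
   the first vertex of a longest path has all its neighbours on the path, closing the path at the
   last of them gives a cycle carrying all these neighbours, and at most two of them are joined to
   it by cycle edges rather than chords. Deleting such vertices reduces the bound 3n - 9 to n = 6.
   There, if all degrees are at least n/2, Dirac's theorem gives a Hamiltonian cycle, so again every
   degree is at most 3; otherwise a vertex of degree at most 2 is deleted and the same dichotomy on
   five vertices leaves only K_4 plus a vertex of degree 2, which contains a forbidden cycle.
   If G is bipartite with 3n - 9 edges, every deleted vertex has degree exactly 3 and by induction
   the rest is K_{3,n-4}. Having no triangles, the new vertex sees only one side; if this is the
   large side, an 8-cycle through the new vertex gives a vertex of the small side four neighbours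
   on it. *)

lemma obtain_two_distinct:
  assumes "2 \<le> card S"
  obtains a b where "a \<in> S" "b \<in> S" "a \<noteq> b"
proof -
  obtain T where "T \<subseteq> S" "card T = 2" using obtain_subset_with_card_n[OF assms] by blast
  then show ?thesis using that unfolding card_2_iff by blast
qed

lemma obtain_three_distinct:
  assumes "3 \<le> card S"
  obtains a b c where "a \<in> S" "b \<in> S" "c \<in> S" "a \<noteq> b" "b \<noteq> c" "a \<noteq> c"
proof -
  obtain T where "T \<subseteq> S" "card T = 3" using obtain_subset_with_card_n[OF assms] by blast
  then show ?thesis using that unfolding card_3_iff by blast
qed

section \<open>Simple graphs\<close>

definition nbr :: "'a set set \<Rightarrow> 'a \<Rightarrow> 'a set" where
  "nbr E v = {u. {v, u} \<in> E}"

lemma simple_graph_finite: "simple_graph V E \<Longrightarrow> finite V"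
  unfolding simple_graph_def by blast

lemma simple_graph_edgeD:
  assumes "simple_graph V E" "{u, v} \<in> E"
  shows "u \<noteq> v" "u \<in> V" "v \<in> V"
proof -
  have "{u, v} \<subseteq> V" "card {u, v} = 2" using assms unfolding simple_graph_def by auto
  then show "u \<noteq> v" "u \<in> V" "v \<in> V" by (auto simp: card_insert_if split: if_splits)
qed

lemma simple_graph_edgeE:
  assumes "simple_graph V E" "e \<in> E"
  obtains u v where "e = {u, v}" "u \<noteq> v"
  using assms unfolding simple_graph_def by (auto simp: card_2_iff)

lemma edges_subset_two_subsets:
  assumes "simple_graph V E"
  shows "E \<subseteq> {e. e \<subseteq> V \<and> card e = 2}" "finite {e. e \<subseteq> V \<and> card e = 2}"
    "card {e. e \<subseteq> V \<and> card e = 2} = card V choose 2"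
  using assms n_subsets[OF simple_graph_finite[OF assms]] unfolding simple_graph_def
  by (auto intro: finite_subset[of _ "Pow V"])

lemma finite_edges: "simple_graph V E \<Longrightarrow> finite E"
  using edges_subset_two_subsets(1,2) by (rule finite_subset)

lemma card_edges_le_choose:
  assumes "simple_graph V E"
  shows "card E \<le> card V choose 2"
  using card_mono[OF edges_subset_two_subsets(2,1)[OF assms]] edges_subset_two_subsets(3)[OF assms]
  by simp

lemma simple_graph_complete_if_card_edges:
  assumes "simple_graph V E" "card E = card V choose 2" "x \<in> V" "y \<in> V" "x \<noteq> y"
  shows "{x, y} \<in> E"
proof -
  have "E = {e. e \<subseteq> V \<and> card e = 2}"
    using edges_subset_two_subsets[OF assms(1)] assms(2) by (metis card_subset_eq)
  then show ?thesis using assms(3-5) by simp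
qed

lemma nbr_subset: "simple_graph V E \<Longrightarrow> nbr E v \<subseteq> V - {v}"
  unfolding nbr_def by (auto dest: simple_graph_edgeD)

lemma incident_edges_eq:
  assumes "simple_graph V E"
  shows "{e \<in> E. v \<in> e} = (\<lambda>u. {v, u}) ` nbr E v"
proof -
  have "e \<in> (\<lambda>u. {v, u}) ` nbr E v" if "e \<in> E" "v \<in> e" for e
  proof -
    obtain a b where "e = {a, b}" using simple_graph_edgeE[OF assms \<open>e \<in> E\<close>] .
    then obtain u where "e = {v, u}" using \<open>v \<in> e\<close> by auto
    then show ?thesis using \<open>e \<in> E\<close> unfolding nbr_def by blast
  qed
  then show ?thesis unfolding nbr_def by auto
qed

lemma card_incident_edges:
  assumes "simple_graph V E"
  shows "card {e \<in> E. v \<in> e} = card (nbr E v)"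
proof -
  have "inj_on (\<lambda>u. {v, u}) (nbr E v)"
    using nbr_subset[OF assms] by (auto intro!: inj_onI simp: doubleton_eq_iff)
  then show ?thesis by (simp add: incident_edges_eq[OF assms] card_image)
qed

lemma card_edges_delete_vertex:
  assumes "simple_graph V E"
  shows "card E = card {e \<in> E. v \<notin> e} + card (nbr E v)"
proof -
  have "card E = card ({e \<in> E. v \<notin> e} \<union> {e \<in> E. v \<in> e})" by (rule arg_cong[where f = card]) blast
  also have "\<dots> = card {e \<in> E. v \<notin> e} + card {e \<in> E. v \<in> e}"
    using finite_edges[OF assms] by (intro card_Un_disjoint) auto
  finally show ?thesis using card_incident_edges[OF assms] by simp
qed

lemma simple_graph_delete_vertex:
  "simple_graph V E \<Longrightarrow> simple_graph (V - {v}) {e \<in> E. v \<notin> e}"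
  unfolding simple_graph_def by auto

lemma handshake:
  assumes "simple_graph V E"
  shows "(\<Sum>v\<in>V. card (nbr E v)) = 2 * card E"
proof -
  have "card {v \<in> V. v \<in> e} = 2" if "e \<in> E" for e
  proof -
    have "e \<subseteq> V" "card e = 2" using assms that unfolding simple_graph_def by auto
    moreover from this(1) have "{v \<in> V. v \<in> e} = e" by blast
    ultimately show ?thesis by simp
  qed
  then have "(\<Sum>v\<in>V. card {e \<in> E. v \<in> e}) = 2 * card E"
    using sum_multicount[OF simple_graph_finite[OF assms] finite_edges[OF assms],
        of "\<lambda>v e. v \<in> e" 2]
    by simp
  then show ?thesis using card_incident_edges[OF assms] by simp
qed

lemma nbr_meets_if_card:
  assumes "simple_graph V E" "S \<subseteq> V" "w \<in> V - S" "card V \<le> card S + card (nbr E w)"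
  shows "nbr E w \<inter> S \<noteq> {}"
proof
  assume "nbr E w \<inter> S = {}"
  then have "nbr E w \<subseteq> V - insert w S" using nbr_subset[OF assms(1)] by blast
  then have "card (nbr E w) \<le> card (V - insert w S)"
    using simple_graph_finite[OF assms(1)] by (intro card_mono) auto
  also have "\<dots> = card V - Suc (card S)"
    using assms(2,3) simple_graph_finite[OF assms(1)]
    by (subst card_Diff_subset) (auto dest: finite_subset)
  finally have "card (nbr E w) \<le> card V - Suc (card S)" .
  moreover have "card S < card V"
    using assms(2,3) simple_graph_finite[OF assms(1)] by (intro psubset_card_mono) auto
  ultimately show False using assms(4) by linarith
qed

lemma has_cycle_two_adjacent_chords_mono:
  assumes "has_cycle_two_adjacent_chords V' E'" "V' \<subseteq> V" "E' \<subseteq> E"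
  shows "has_cycle_two_adjacent_chords V E"
proof -
  have "is_cycle V E cs" if "is_cycle V' E' cs" for cs
    using that assms(2,3) unfolding is_cycle_def by blast
  moreover have "is_chord E cs e" if "is_chord E' cs e" for cs e
    using that assms(3) unfolding is_chord_def by blast
  ultimately show ?thesis
    using assms(1) unfolding has_cycle_two_adjacent_chords_def by meson
qed

lemma no_two_chords_delete_vertex:
  "\<not> has_cycle_two_adjacent_chords V E \<Longrightarrow>
     \<not> has_cycle_two_adjacent_chords (V - {v}) {e \<in> E. v \<notin> e}"
  using has_cycle_two_adjacent_chords_mono by blast

section \<open>Cycles and paths\<close>

lemma cycle_edge_at:
  assumes "distinct cs" "i < length cs" "{cs ! i, u} \<in> cycle_edges cs"
  shows "u = cs ! ((i + 1) mod length cs) \<or> u = cs ! ((i + length cs - 1) mod length cs)"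
proof -
  let ?L = "length cs"
  obtain j where j: "j < ?L" "{cs ! i, u} = {cs ! j, cs ! ((j + 1) mod ?L)}"
    using assms(3) unfolding cycle_edges_def by auto
  have "0 < ?L" using j(1) by linarith
  then have "(j + 1) mod ?L < ?L" by simp
  then consider "i = j" "u = cs ! ((j + 1) mod ?L)" | "i = (j + 1) mod ?L" "u = cs ! j"
    using j assms(1,2) by (auto simp: doubleton_eq_iff nth_eq_iff_index_eq)
  then show ?thesis
  proof cases
    case 2
    have "j = (i + ?L - 1) mod ?L"
    proof (cases "Suc j < ?L")
      case False
      then have "?L = Suc j" using j(1) by simp
      then show ?thesis using 2(1) by simp
    qed (use 2(1) in simp)
    then show ?thesis using 2 by simp
  qed simp
qed

text \<open>Only the two cycle edges at \<open>v\<close> fail to be chords.\<close>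
lemma two_chords_if_four_nbrs_on_cycle:
  assumes "is_cycle V E cs" "v \<in> set cs" "S \<subseteq> nbr E v \<inter> set cs" "4 \<le> card S"
  shows "has_cycle_two_adjacent_chords V E"
proof -
  let ?L = "length cs"
  obtain i where i: "i < ?L" "cs ! i = v" using assms(2) by (metis in_set_conv_nth)
  have dist: "distinct cs" using assms(1) unfolding is_cycle_def by blast
  let ?S = "nbr E v \<inter> set cs"
  let ?T = "{cs ! ((i + 1) mod ?L), cs ! ((i + ?L - 1) mod ?L)}"
  have "card S \<le> card ?S" using card_mono[OF _ assms(3)] by simp
  moreover have "card ?S - card ?T \<le> card (?S - ?T)" by (rule diff_card_le_card_Diff) simp
  moreover have "card ?T \<le> 2" by (simp add: card_insert_le_m1)
  ultimately have "2 \<le> card (?S - ?T)" using assms(4) by linarith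
  then obtain u1 u2 where u: "u1 \<in> ?S - ?T" "u2 \<in> ?S - ?T" "u1 \<noteq> u2"
    by (rule obtain_two_distinct)
  have chord: "is_chord E cs {v, u}" if "u \<in> ?S - ?T" for u
    using that cycle_edge_at[OF dist i(1)] i(2) assms(2) unfolding is_chord_def nbr_def by auto
  have "{v, u1} \<noteq> {v, u2}" using u(3) by (auto simp: doubleton_eq_iff)
  then show ?thesis
    unfolding has_cycle_two_adjacent_chords_def using assms(1) chord u by blast
qed

definition is_path :: "'a set \<Rightarrow> 'a set set \<Rightarrow> 'a list \<Rightarrow> bool" where
  "is_path V E p \<longleftrightarrow> p \<noteq> [] \<and> distinct p \<and> set p \<subseteq> V \<and> successively (\<lambda>x y. {x, y} \<in> E) p"

lemma is_cycle_if_closed_path: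
  assumes "is_path V E p" "{last p, hd p} \<in> E" "3 \<le> length p"
  shows "is_cycle V E p"
proof -
  have "e \<in> E" if "e \<in> cycle_edges p" for e
  proof -
    obtain i where i: "i < length p" "e = {p ! i, p ! ((i + 1) mod length p)}"
      using \<open>e \<in> cycle_edges p\<close> unfolding cycle_edges_def by auto
    show ?thesis
    proof (cases "Suc i < length p")
      case True
      then show ?thesis using i assms(1) unfolding is_path_def successively_conv_nth by simp
    next
      case False
      then have "Suc i = length p" using i(1) by simp
      moreover have "p \<noteq> []" using i(1) by auto
      ultimately have "p ! i = last p" "(i + 1) mod length p = 0" "p ! 0 = hd p"
        by (auto simp: last_conv_nth hd_conv_nth dest: sym[of "Suc i"])
      then have "e = {last p, hd p}" using i(2) by simp
      then show ?thesis using assms(2) by simp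
    qed
  qed
  then show ?thesis using assms unfolding is_cycle_def is_path_def by blast
qed

lemma length_path_le: "simple_graph V E \<Longrightarrow> is_path V E p \<Longrightarrow> length p \<le> card V"
  unfolding is_path_def using card_mono[OF simple_graph_finite]
    by (fastforce simp: distinct_card[symmetric])

lemma card_nbr_less_length:
  assumes "simple_graph V E" "is_path V E p" "v \<in> set p" "nbr E v \<subseteq> set p"
  shows "card (nbr E v) < length p"
proof -
  have "v \<notin> nbr E v" using nbr_subset[OF assms(1)] by blast
  then have "nbr E v \<subset> set p" using assms(3,4) by blast
  then have "card (nbr E v) < card (set p)" by (rule psubset_card_mono[OF finite_set])
  then show ?thesis using assms(2) unfolding is_path_def by (simp add: distinct_card)
qed

lemma is_path_rev: "is_path V E p \<Longrightarrow> is_path V E (rev p)"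
  unfolding is_path_def by (simp add: insert_commute)

lemma successively_take_drop:
  assumes "successively P xs"
  shows "successively P (take m xs)" "successively P (drop m xs)"
  using assms successively_append_iff[of P "take m xs" "drop m xs"] by simp_all

lemma is_path_take: "is_path V E p \<Longrightarrow> 0 < m \<Longrightarrow> is_path V E (take m p)"
  unfolding is_path_def using successively_take_drop(1) by (auto dest: in_set_takeD)

lemma is_path_drop: "is_path V E p \<Longrightarrow> m < length p \<Longrightarrow> is_path V E (drop m p)"
  unfolding is_path_def using successively_take_drop(2) by (auto dest: in_set_dropD)

lemma is_path_Cons:
  "is_path V E p \<Longrightarrow> u \<in> V \<Longrightarrow> u \<notin> set p \<Longrightarrow> {u, hd p} \<in> E \<Longrightarrow> is_path V E (u # p)"
  unfolding is_path_def by (simp add: successively_Cons)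

lemma is_path_append:
  "is_path V E p \<Longrightarrow> is_path V E q \<Longrightarrow> set p \<inter> set q = {} \<Longrightarrow> {last p, hd q} \<in> E \<Longrightarrow>
    is_path V E (p @ q)"
  unfolding is_path_def by (simp add: successively_append_iff)

lemma closed_path_rotate:
  assumes "is_path V E p" "{last p, hd p} \<in> E" "u \<in> set p"
  obtains q where "is_path V E q" "hd q = u" "set q = set p" "length q = length p"
proof -
  obtain m where m: "m < length p" "p ! m = u" using assms(3) by (metis in_set_conv_nth)
  let ?q = "drop m p @ take m p"
  have "is_path V E ?q"
  proof (cases "m = 0")
    case False
    have "set (drop m p) \<inter> set (take m p) = {}"
      using assms(1) set_take_disj_set_drop_if_distinct[of p m m] unfolding is_path_def by auto
    then show ?thesis
      using is_path_append[OF is_path_drop[OF assms(1) m(1)] is_path_take[OF assms(1)]]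
        False m(1) assms(2)
      by simp
  qed (use assms(1) in simp)
  moreover have "hd ?q = u" using m by (simp add: hd_drop_conv_nth)
  moreover have "set ?q = set p" by (metis append_take_drop_id set_append sup_commute)
  ultimately show ?thesis using that by simp
qed

lemma closed_path_extend:
  assumes "is_path V E p" "{last p, hd p} \<in> E" "w \<in> V" "w \<notin> set p" "u \<in> set p" "{w, u} \<in> E"
  obtains q where "is_path V E q" "length q = Suc (length p)"
proof -
  obtain r where r: "is_path V E r" "hd r = u" "set r = set p" "length r = length p"
    using closed_path_rotate[OF assms(1,2,5)] .
  have "is_path V E (w # r)" using is_path_Cons[OF r(1) assms(3)] assms(4,6) r(2,3) by simp
  then show ?thesis using that r(4) by simp
qed

lemma cycle_through_nbrs_of_hd:
  assumes "simple_graph V E" "is_path V E p" "nbr E (hd p) \<subseteq> set p" "2 \<le> card (nbr E (hd p))"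
  obtains cs where "is_cycle V E cs" "hd p \<in> set cs" "nbr E (hd p) \<subseteq> set cs"
proof -
  let ?N = "nbr E (hd p)"
  let ?J = "{i. i < length p \<and> p ! i \<in> ?N}"
  have "?N \<noteq> {}" using assms(4) by (intro notI) simp
  then obtain i where "i < length p" "p ! i \<in> ?N" using assms(3)
    by (metis ex_in_conv in_set_conv_nth subsetD)
  then have J: "finite ?J" "?J \<noteq> {}" by auto
  define j where "j = Max ?J"
  have j: "j < length p" "p ! j \<in> ?N" and jmax: "\<And>i. i < length p \<Longrightarrow> p ! i \<in> ?N \<Longrightarrow> i \<le> j"
    using Max_in[OF J] Max_ge[OF J(1)] unfolding j_def by auto
  define cs where "cs = take (Suc j) p"
  have cs: "is_path V E cs" "hd cs = hd p" "last cs = p ! j"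
    using is_path_take[OF assms(2)] j(1) assms(2) unfolding cs_def is_path_def
      by (auto simp: last_conv_nth)
  have Ncs: "?N \<subseteq> set cs"
  proof
    fix u assume "u \<in> ?N"
    then obtain i where i: "i < length p" "p ! i = u" using assms(3)
      by (metis in_set_conv_nth subsetD)
    then have "i \<le> j" using jmax \<open>u \<in> ?N\<close> by blast
    then show "u \<in> set cs" using i unfolding cs_def by (auto simp: in_set_conv_nth)
  qed
  have "hd cs \<in> set cs" using cs(1) unfolding is_path_def by simp
  then have "card ?N < length cs" using card_nbr_less_length[OF assms(1) cs(1)] Ncs cs(2) by simp
  moreover have "{last cs, hd cs} \<in> E" using j(2) cs(2,3) unfolding nbr_def
    by (simp add: insert_commute)
  ultimately have "is_cycle V E cs" using is_cycle_if_closed_path[OF cs(1)] assms(4) by simp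
  then show ?thesis using that \<open>hd cs \<in> set cs\<close> cs(2) Ncs by simp
qed

section \<open>Longest paths and Dirac's theorem\<close>

definition longest_path :: "'a set \<Rightarrow> 'a set set \<Rightarrow> 'a list \<Rightarrow> bool" where
  "longest_path V E p \<longleftrightarrow> is_path V E p \<and> (\<forall>q. is_path V E q \<longrightarrow> length q \<le> length p)"

lemma longest_path_exists:
  assumes "simple_graph V E" "V \<noteq> {}"
  obtains p where "longest_path V E p"
proof -
  obtain v where "v \<in> V" using assms(2) by blast
  then have "is_path V E [v]" unfolding is_path_def by simp
  moreover have "\<forall>q. is_path V E q \<longrightarrow> length q < Suc (card V)"
    using length_path_le[OF assms(1)] by (simp add: le_imp_less_Suc)
  ultimately obtain p where "is_path V E p" "\<forall>q. is_path V E q \<longrightarrow> length q \<le> length p"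
    using Lattices_Big.ex_has_greatest_nat[of "is_path V E" "[v]" length "Suc (card V)"] by blast
  then show ?thesis using that unfolding longest_path_def by blast
qed

lemma longest_path_rev: "longest_path V E p \<Longrightarrow> longest_path V E (rev p)"
  unfolding longest_path_def using is_path_rev[of V E p] by simp

lemma nbr_hd_longest_path:
  assumes "simple_graph V E" "longest_path V E p"
  shows "nbr E (hd p) \<subseteq> set p"
proof
  fix u assume u: "u \<in> nbr E (hd p)"
  show "u \<in> set p"
  proof (rule ccontr)
    assume "u \<notin> set p"
    moreover have "{hd p, u} \<in> E" using u unfolding nbr_def by simp
    ultimately have "is_path V E (u # p)"
      using is_path_Cons[of V E p u] simple_graph_edgeD(3)[OF assms(1)] assms(2)
      unfolding longest_path_def by (simp add: insert_commute)
    then show False using assms(2) unfolding longest_path_def by fastforce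
  qed
qed

lemma nbr_last_longest_path:
  assumes "simple_graph V E" "longest_path V E p"
  shows "nbr E (last p) \<subseteq> set p"
proof -
  have "p \<noteq> []" using assms(2) unfolding longest_path_def is_path_def by blast
  then show ?thesis using nbr_hd_longest_path[OF assms(1) longest_path_rev[OF assms(2)]]
    by (simp add: hd_rev)
qed

lemma low_degree_vertex_exists:
  assumes "simple_graph V E" "V \<noteq> {}" "\<not> has_cycle_two_adjacent_chords V E"
  obtains v where "v \<in> V" "card (nbr E v) \<le> 3"
proof -
  obtain p where lp: "longest_path V E p" using longest_path_exists[OF assms(1,2)] .
  then have p: "is_path V E p" unfolding longest_path_def by blast
  have "card (nbr E (hd p)) \<le> 3"
  proof (rule ccontr)
    assume "\<not> card (nbr E (hd p)) \<le> 3"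
    then have N4: "4 \<le> card (nbr E (hd p))" by simp
    obtain cs where cs: "is_cycle V E cs" "hd p \<in> set cs" "nbr E (hd p) \<subseteq> set cs"
      using cycle_through_nbrs_of_hd[OF assms(1) p nbr_hd_longest_path[OF assms(1) lp]] N4 by auto
    then have "nbr E (hd p) \<subseteq> nbr E (hd p) \<inter> set cs" by blast
    then show False using two_chords_if_four_nbrs_on_cycle[OF cs(1,2) _ N4] assms(3) by blast
  qed
  moreover have "hd p \<in> V" using p unfolding is_path_def by auto
  ultimately show ?thesis using that by blast
qed

text \<open>The indices \<open>i\<close> with \<open>p ! Suc i\<close> adjacent to the first vertex and those with \<open>p ! i\<close>
  adjacent to the last vertex both lie in \<open>{..<length p - 1}\<close>, so by counting they meet.\<close>
lemma path_crossing_index: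
  assumes "simple_graph V E" "is_path V E p"
    "nbr E (hd p) \<subseteq> set p" "nbr E (last p) \<subseteq> set p"
    "length p \<le> card (nbr E (hd p)) + card (nbr E (last p))"
  obtains i where "Suc i < length p" "p ! Suc i \<in> nbr E (hd p)" "p ! i \<in> nbr E (last p)"
proof -
  define k where "k = length p - 1"
  have "p \<noteq> []" using assms(2) unfolding is_path_def by blast
  then have Lk: "length p = Suc k" and ends: "hd p = p ! 0" "last p = p ! k"
    unfolding k_def by (auto simp: hd_conv_nth last_conv_nth)
  have loopfree: "hd p \<notin> nbr E (hd p)" "last p \<notin> nbr E (last p)"
    using nbr_subset[OF assms(1)] by blast+
  define A where "A = {i. i < k \<and> p ! Suc i \<in> nbr E (hd p)}"
  define B where "B = {i. i < k \<and> p ! i \<in> nbr E (last p)}"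
  have fin: "finite A" "finite B" unfolding A_def B_def by simp_all
  have "nbr E (hd p) \<subseteq> (\<lambda>i. p ! Suc i) ` A"
  proof
    fix u assume u: "u \<in> nbr E (hd p)"
    then obtain m where m: "m < length p" "p ! m = u" using assms(3)
      by (metis in_set_conv_nth subsetD)
    with u loopfree ends obtain i where "m = Suc i" by (cases m) auto
    then show "u \<in> (\<lambda>i. p ! Suc i) ` A" using m u Lk unfolding A_def by auto
  qed
  then have cA: "card (nbr E (hd p)) \<le> card A" by (rule surj_card_le[OF fin(1)])
  have "nbr E (last p) \<subseteq> (\<lambda>i. p ! i) ` B"
  proof
    fix u assume u: "u \<in> nbr E (last p)"
    then obtain m where m: "m < length p" "p ! m = u" using assms(4)
      by (metis in_set_conv_nth subsetD)
    have "m < k" using m Lk u loopfree ends by (cases "m = k") auto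
    then show "u \<in> (\<lambda>i. p ! i) ` B" using m u unfolding B_def by auto
  qed
  then have cB: "card (nbr E (last p)) \<le> card B" by (rule surj_card_le[OF fin(2)])
  have "A \<inter> B \<noteq> {}"
  proof
    assume "A \<inter> B = {}"
    then have "card A + card B = card (A \<union> B)" using card_Un_disjoint[OF fin] by simp
    also have "\<dots> \<le> card {..<k}" unfolding A_def B_def by (intro card_mono) auto
    finally show False using cA cB assms(5) Lk by simp
  qed
  then obtain i where "i \<in> A" "i \<in> B" by blast
  then show ?thesis using Lk unfolding A_def B_def by (intro that[of i]) auto
qed

lemma longest_path_closes:
  assumes "simple_graph V E" "longest_path V E p"
    "length p \<le> card (nbr E (hd p)) + card (nbr E (last p))"
  obtains q where "is_path V E q" "{last q, hd q} \<in> E" "set q = set p" "length q = length p"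
proof -
  have p: "is_path V E p" using assms(2) unfolding longest_path_def by blast
  obtain i where i: "Suc i < length p" "p ! Suc i \<in> nbr E (hd p)" "p ! i \<in> nbr E (last p)"
    using path_crossing_index[OF assms(1) p nbr_hd_longest_path[OF assms(1,2)]
        nbr_last_longest_path[OF assms(1,2)] assms(3)] .
  define q where "q = take (Suc i) p @ rev (drop (Suc i) p)"
  have "set (take (Suc i) p) \<inter> set (rev (drop (Suc i) p)) = {}"
    using p set_take_disj_set_drop_if_distinct[of p "Suc i" "Suc i"] unfolding is_path_def by auto
  moreover have "last (take (Suc i) p) = p ! i" "hd (rev (drop (Suc i) p)) = last p"
    using i(1) by (simp_all add: take_Suc_conv_app_nth hd_rev)
  moreover have "{p ! i, last p} \<in> E" using i(3) unfolding nbr_def by (simp add: insert_commute)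
  ultimately have "is_path V E q"
    using is_path_append[OF is_path_take[OF p] is_path_rev[OF is_path_drop[OF p]]] i(1)
    unfolding q_def by simp
  moreover have "hd q = hd p" "last q = p ! Suc i"
    using i(1) unfolding q_def by (auto simp: hd_append hd_take last_rev hd_drop_conv_nth)
  then have "{last q, hd q} \<in> E" using i(2) unfolding nbr_def by (simp add: insert_commute)
  moreover have "set q = set p" unfolding q_def by (metis append_take_drop_id set_append set_rev)
  moreover have "length q = length p" unfolding q_def using i(1) by simp
  ultimately show ?thesis using that by blast
qed

theorem dirac:
  assumes "simple_graph V E" "3 \<le> card V" "\<forall>v\<in>V. card V \<le> 2 * card (nbr E v)"
  obtains cs where "is_cycle V E cs" "set cs = V"
proof -
  have "V \<noteq> {}" using assms(2) by auto
  then obtain p where lp: "longest_path V E p" using longest_path_exists[OF assms(1)] by blast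
  have p: "is_path V E p" using lp unfolding longest_path_def by blast
  have ends: "hd p \<in> set p" "hd p \<in> V" "last p \<in> V" using p unfolding is_path_def by auto
  have deg: "card V \<le> 2 * card (nbr E (hd p))" "card V \<le> 2 * card (nbr E (last p))"
    using assms(3) ends(2,3) by auto
  have long: "card (nbr E (hd p)) < length p"
    using card_nbr_less_length[OF assms(1) p ends(1) nbr_hd_longest_path[OF assms(1) lp]] .
  have "length p \<le> card V" using length_path_le[OF assms(1) p] .
  then have "length p \<le> card (nbr E (hd p)) + card (nbr E (last p))" using deg by linarith
  then obtain q where q: "is_path V E q" "{last q, hd q} \<in> E" "set q = set p" "length q = length p"
    using longest_path_closes[OF assms(1) lp] by blast
  have "set p = V"
  proof (rule ccontr)
    assume "set p \<noteq> V"
    then obtain w where w: "w \<in> V" "w \<notin> set p" using p unfolding is_path_def by blast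
    have "card V \<le> card (set p) + card (nbr E w)"
      using assms(3) w(1) deg(1) long p unfolding is_path_def by (auto simp: distinct_card)
    then have "nbr E w \<inter> set p \<noteq> {}"
      using nbr_meets_if_card[OF assms(1)] p w unfolding is_path_def by blast
    then obtain u where "u \<in> set q" "{w, u} \<in> E" using q(3) unfolding nbr_def by auto
    then obtain r where "is_path V E r" "length r = Suc (length q)"
      using closed_path_extend[OF q(1,2) w(1)] w(2) q(3) by blast
    moreover have "length r \<le> length p" using lp \<open>is_path V E r\<close> unfolding longest_path_def by blast
    ultimately show False using q(4) by simp
  qed
  moreover have "3 \<le> length q" using q(4) long deg(1) assms(2) by linarith
  ultimately show ?thesis using that is_cycle_if_closed_path[OF q(1,2)] q(3) by auto
qed

section \<open>The edge bound\<close>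

lemma hamiltonian_card_edges_le:
  assumes "simple_graph V E" "\<not> has_cycle_two_adjacent_chords V E" "is_cycle V E cs" "set cs = V"
  shows "2 * card E \<le> 3 * card V"
proof -
  have deg: "card (nbr E v) \<le> 3" if "v \<in> V" for v
  proof (rule ccontr)
    assume "\<not> card (nbr E v) \<le> 3"
    then have "4 \<le> card (nbr E v)" by simp
    moreover have "nbr E v \<subseteq> nbr E v \<inter> set cs" using nbr_subset[OF assms(1)] assms(4) by blast
    moreover have "v \<in> set cs" using assms(4) that by simp
    ultimately show False using two_chords_if_four_nbrs_on_cycle[OF assms(3)] assms(2) by blast
  qed
  have "(\<Sum>v\<in>V. card (nbr E v)) \<le> (\<Sum>v\<in>V. 3)" by (rule sum_mono) (rule deg)
  then show ?thesis using handshake[OF assms(1)] by simp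
qed

lemma card_edges_le_if_min_degree_half:
  assumes "simple_graph V E" "\<not> has_cycle_two_adjacent_chords V E" "3 \<le> card V"
    "\<forall>v\<in>V. card V \<le> 2 * card (nbr E v)"
  shows "2 * card E \<le> 3 * card V"
  using dirac[OF assms(1,3,4)] hamiltonian_card_edges_le[OF assms(1,2)] by blast

text \<open>On the cycle \<open>v a c d b\<close> the vertex \<open>a\<close> has all four other vertices as neighbours.\<close>
lemma complete_four_plus_vertex_two_chords:
  assumes "distinct [v, a, c, d, b]" "{v, a, b, c, d} \<subseteq> V" "{v, a} \<in> E" "{v, b} \<in> E"
    "\<And>x y. x \<in> {a, b, c, d} \<Longrightarrow> y \<in> {a, b, c, d} \<Longrightarrow> x \<noteq> y \<Longrightarrow> {x, y} \<in> E"
  shows "has_cycle_two_adjacent_chords V E"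
proof -
  have edges: "{a, c} \<in> E" "{c, d} \<in> E" "{d, b} \<in> E" "{a, d} \<in> E" "{a, b} \<in> E"
    using assms(1) by (auto intro: assms(5))
  let ?cs = "[v, a, c, d, b]"
  have "is_path V E ?cs" unfolding is_path_def using assms(1-3) edges by auto
  then have cycle: "is_cycle V E ?cs"
    by (rule is_cycle_if_closed_path) (use assms(4) in \<open>simp_all add: insert_commute\<close>)
  have "{v, c, d, b} \<subseteq> nbr E a \<inter> set ?cs"
    using assms(3) edges unfolding nbr_def by (auto simp: insert_commute)
  moreover have "card {v, c, d, b} = 4" using assms(1) by auto
  ultimately show ?thesis using two_chords_if_four_nbrs_on_cycle[OF cycle, of a "{v, c, d, b}"]
    by simp
qed

lemma five_vertices_card_edges_le:
  assumes "simple_graph V E" "card V = 5" "\<not> has_cycle_two_adjacent_chords V E"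
  shows "card E \<le> 7"
proof (cases "\<forall>v\<in>V. card V \<le> 2 * card (nbr E v)")
  case True
  then show ?thesis using card_edges_le_if_min_degree_half[OF assms(1,3)] assms(2) by simp
next
  case False
  then obtain v where v: "v \<in> V" "card (nbr E v) \<le> 2" using assms(2) by auto
  let ?V' = "V - {v}" and ?E' = "{e \<in> E. v \<notin> e}"
  have G': "simple_graph ?V' ?E'" using simple_graph_delete_vertex[OF assms(1)] .
  have V': "card ?V' = 4" using assms(2) v(1) simple_graph_finite[OF assms(1)] by simp
  have "card ?E' \<le> 6" using card_edges_le_choose[OF G'] V' by (simp add: numeral_eq_Suc)
  show ?thesis
  proof (rule ccontr)
    assume "\<not> card E \<le> 7"
    then have "card (nbr E v) = 2" "card ?E' = card ?V' choose 2"
      using card_edges_delete_vertex[OF assms(1), of v] v(2) \<open>card ?E' \<le> 6\<close> V'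
      by (simp_all add: numeral_eq_Suc)
    obtain a b where ab: "nbr E v = {a, b}" "a \<noteq> b"
      using \<open>card (nbr E v) = 2\<close> unfolding card_2_iff by blast
    have abV: "a \<in> ?V'" "b \<in> ?V'" using ab(1) nbr_subset[OF assms(1), of v] by auto
    have "card (?V' - {a, b}) = 2"
      using V' abV ab(2) simple_graph_finite[OF assms(1)] by (simp add: card_Diff_subset)
    then obtain c d where cd: "?V' - {a, b} = {c, d}" "c \<noteq> d" unfolding card_2_iff by blast
    then have "{a, b, c, d} \<subseteq> ?V'" "distinct [v, a, c, d, b]" using abV ab(2) by auto
    moreover have "{v, a} \<in> E" "{v, b} \<in> E" using ab(1) unfolding nbr_def by auto
    moreover have "{x, y} \<in> E" if "x \<in> {a, b, c, d}" "y \<in> {a, b, c, d}" "x \<noteq> y" for x y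
      using simple_graph_complete_if_card_edges[OF G' \<open>card ?E' = _\<close>] that \<open>{a, b, c, d} \<subseteq> ?V'\<close>
      by blast
    ultimately have "has_cycle_two_adjacent_chords V E"
      using complete_four_plus_vertex_two_chords[of v a c d b V E] v(1) by blast
    then show False using assms(3) by blast
  qed
qed

lemma six_vertices_card_edges_le:
  assumes "simple_graph V E" "card V = 6" "\<not> has_cycle_two_adjacent_chords V E"
  shows "card E \<le> 9"
proof (cases "\<forall>v\<in>V. card V \<le> 2 * card (nbr E v)")
  case True
  then show ?thesis using card_edges_le_if_min_degree_half[OF assms(1,3)] assms(2) by simp
next
  case False
  then obtain v where v: "v \<in> V" "card (nbr E v) \<le> 2" using assms(2) by auto
  have "card {e \<in> E. v \<notin> e} \<le> 7"
    using five_vertices_card_edges_le[OF simple_graph_delete_vertex[OF assms(1)] _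
        no_two_chords_delete_vertex[OF assms(3)]] assms(2) v(1) simple_graph_finite[OF assms(1)]
    by simp
  then show ?thesis using card_edges_delete_vertex[OF assms(1), of v] v(2) by linarith
qed

theorem card_edges_le:
  assumes "6 \<le> n" "simple_graph V E" "card V = n" "\<not> has_cycle_two_adjacent_chords V E"
  shows "card E \<le> 3 * n - 9"
  using assms
proof (induction n arbitrary: V E rule: nat_induct_at_least)
  case base
  then show ?case using six_vertices_card_edges_le by simp
next
  case (Suc n)
  have "V \<noteq> {}" using Suc.prems(2) by auto
  then obtain v where v: "v \<in> V" "card (nbr E v) \<le> 3"
    using low_degree_vertex_exists[OF Suc.prems(1) _ Suc.prems(3)] by blast
  have "card {e \<in> E. v \<notin> e} \<le> 3 * n - 9"
    using Suc.IH[OF simple_graph_delete_vertex[OF Suc.prems(1)] _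
        no_two_chords_delete_vertex[OF Suc.prems(3)]]
      Suc.prems(2) v(1) simple_graph_finite[OF Suc.prems(1)] by simp
  then have "card E \<le> (3 * n - 9) + 3" using card_edges_delete_vertex[OF Suc.prems(1), of v] v(2)
    by linarith
  also have "\<dots> = 3 * Suc n - 9" using Suc.hyps by simp
  finally show ?case .
qed

section \<open>Bipartite extremal graphs\<close>

definition cross_edges :: "'a set \<Rightarrow> 'a set \<Rightarrow> 'a set set" where
  "cross_edges X Y = {{x, y} | x y. x \<in> X \<and> y \<in> Y}"

lemma doubleton_in_cross_edges_iff:
  "{u, w} \<in> cross_edges X Y \<longleftrightarrow> u \<in> X \<and> w \<in> Y \<or> u \<in> Y \<and> w \<in> X"
  unfolding cross_edges_def by (auto simp: doubleton_eq_iff)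

lemma cross_edges_commute: "cross_edges X Y = cross_edges Y X"
  unfolding cross_edges_def by (metis insert_commute)

lemma cross_edges_insert_right: "cross_edges X (insert v Y) = cross_edges X Y \<union> (\<lambda>x. {v, x}) ` X"
  unfolding cross_edges_def by (auto simp: insert_commute)

lemma cross_edges_eq_image: "cross_edges X Y = (\<lambda>(x, y). {x, y}) ` (X \<times> Y)"
  unfolding cross_edges_def by auto

lemma card_cross_edges:
  assumes "finite X" "finite Y" "X \<inter> Y = {}"
  shows "card (cross_edges X Y) = card X * card Y"
proof -
  have "inj_on (\<lambda>(x, y). {x, y}) (X \<times> Y)"
    using assms(3) by (intro inj_onI) (auto simp: doubleton_eq_iff)
  then show ?thesis by (simp add: cross_edges_eq_image card_image card_cartesian_product)
qed

lemma bipartiteI: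
  assumes "A \<union> B = V" "A \<inter> B = {}" "E \<subseteq> cross_edges A B"
  shows "bipartite V E"
proof -
  have "\<exists>a\<in>A. \<exists>b\<in>B. e = {a, b}" if "e \<in> E" for e
    using assms(3) that unfolding cross_edges_def by blast
  then show ?thesis using assms(1,2) unfolding bipartite_def by blast
qed

lemma bipartiteE:
  assumes "bipartite V E"
  obtains A B where "A \<union> B = V" "A \<inter> B = {}" "E \<subseteq> cross_edges A B"
proof -
  obtain A B where "A \<union> B = V" "A \<inter> B = {}" "\<forall>e\<in>E. \<exists>a\<in>A. \<exists>b\<in>B. e = {a, b}"
    using assms unfolding bipartite_def by blast
  moreover from this(3) have "E \<subseteq> cross_edges A B" unfolding cross_edges_def by blast
  ultimately show ?thesis using that by blast
qed

lemma bipartite_no_triangle: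
  assumes "bipartite V E" "{a, b} \<in> E" "{b, c} \<in> E" "{a, c} \<in> E"
  shows False
proof -
  obtain A B where AB: "A \<inter> B = {}" "E \<subseteq> cross_edges A B" using bipartiteE[OF assms(1)] .
  then have "{a, b} \<in> cross_edges A B" "{b, c} \<in> cross_edges A B" "{a, c} \<in> cross_edges A B"
    using assms(2-4) by blast+
  then show False using AB(1) unfolding doubleton_in_cross_edges_iff by blast
qed

lemma bipartite_delete_vertex:
  assumes "bipartite V E"
  shows "bipartite (V - {v}) {e \<in> E. v \<notin> e}"
proof -
  obtain A B where AB: "A \<union> B = V" "A \<inter> B = {}" "E \<subseteq> cross_edges A B"
    using bipartiteE[OF assms] .
  have "e \<in> cross_edges (A - {v}) (B - {v})" if e: "e \<in> E" "v \<notin> e" for e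
  proof -
    obtain x y where "e = {x, y}" "x \<in> A" "y \<in> B" using AB(3) e(1) unfolding cross_edges_def
      by blast
    then show ?thesis using e(2) unfolding cross_edges_def by blast
  qed
  moreover have "(A - {v}) \<union> (B - {v}) = V - {v}" "(A - {v}) \<inter> (B - {v}) = {}"
    using AB(1,2) by blast+
  ultimately show ?thesis by (intro bipartiteI) blast+
qed

definition complete_bipartite_on :: "'a set \<Rightarrow> 'a set set \<Rightarrow> 'a set \<Rightarrow> bool" where
  "complete_bipartite_on V E X \<longleftrightarrow> X \<subseteq> V \<and> E = cross_edges X (V - X)"

lemma complete_bipartite_on_edge:
  "complete_bipartite_on V E X \<Longrightarrow> x \<in> X \<Longrightarrow> y \<in> V - X \<Longrightarrow> {x, y} \<in> E"
  unfolding complete_bipartite_on_def by (simp add: doubleton_in_cross_edges_iff)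

lemma complete_bipartite_on_swap:
  assumes "complete_bipartite_on V E X"
  shows "complete_bipartite_on V E (V - X)"
proof -
  have "V - (V - X) = X" using assms unfolding complete_bipartite_on_def by blast
  then show ?thesis using assms cross_edges_commute[of X] unfolding complete_bipartite_on_def
    by simp
qed

lemma complete_bipartite_on_insert_vertex:
  assumes "simple_graph V E" "v \<in> V" "complete_bipartite_on (V - {v}) {e \<in> E. v \<notin> e} X"
    "nbr E v = X"
  shows "complete_bipartite_on V E X"
proof -
  have X: "X \<subseteq> V - {v}" using assms(3) unfolding complete_bipartite_on_def by blast
  have "E = {e \<in> E. v \<notin> e} \<union> {e \<in> E. v \<in> e}" by blast
  also have "\<dots> = cross_edges X (V - {v} - X) \<union> (\<lambda>u. {v, u}) ` X"
    using assms(3,4) incident_edges_eq[OF assms(1)] unfolding complete_bipartite_on_def by simp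
  also have "\<dots> = cross_edges X (V - X)"
  proof -
    have "V - X = insert v (V - {v} - X)" using assms(2) X by blast
    then show ?thesis by (simp add: cross_edges_insert_right)
  qed
  finally show ?thesis using X unfolding complete_bipartite_on_def by blast
qed

text \<open>The 8-cycle \<open>v y\<^sub>1 x\<^sub>1 y\<^sub>2 x\<^sub>2 y\<^sub>4 x\<^sub>3 y\<^sub>3\<close> carries all four neighbours
  \<open>y\<^sub>1, y\<^sub>2, y\<^sub>3, y\<^sub>4\<close> of \<open>x\<^sub>1\<close>.\<close>
lemma complete_bipartite_plus_vertex_two_chords:
  assumes "simple_graph V E" "v \<in> V" "complete_bipartite_on (V - {v}) {e \<in> E. v \<notin> e} X"
    "3 \<le> card X" "4 \<le> card (V - {v} - X)" "2 \<le> card (nbr E v - X)"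
  shows "has_cycle_two_adjacent_chords V E"
proof -
  let ?Y = "V - {v} - X"
  have X: "X \<subseteq> V - {v}" using assms(3) unfolding complete_bipartite_on_def by blast
  have cross: "{x, y} \<in> E" "{y, x} \<in> E" if "x \<in> X" "y \<in> ?Y" for x y
    using complete_bipartite_on_edge[OF assms(3) that] by (simp_all add: insert_commute)
  obtain x1 x2 x3 where x: "x1 \<in> X" "x2 \<in> X" "x3 \<in> X" "x1 \<noteq> x2" "x2 \<noteq> x3" "x1 \<noteq> x3"
    using obtain_three_distinct[OF assms(4)] .
  obtain y1 y3 where y13: "y1 \<in> nbr E v - X" "y3 \<in> nbr E v - X" "y1 \<noteq> y3"
    using obtain_two_distinct[OF assms(6)] .
  then have y13Y: "y1 \<in> ?Y" "y3 \<in> ?Y" using nbr_subset[OF assms(1), of v] by blast+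
  have "card (?Y - {y1, y3}) = card ?Y - 2"
    using y13Y y13(3) simple_graph_finite[OF assms(1)] by (subst card_Diff_subset) auto
  then have "2 \<le> card (?Y - {y1, y3})" using assms(5) by simp
  then obtain y2 y4 where y24: "y2 \<in> ?Y - {y1, y3}" "y4 \<in> ?Y - {y1, y3}" "y2 \<noteq> y4"
    by (rule obtain_two_distinct)
  let ?cs = "[v, y1, x1, y2, x2, y4, x3, y3]"
  have "distinct ?cs" using x X y13(3) y13Y y24 by auto
  moreover have "set ?cs \<subseteq> V" using assms(2) x X y13Y y24 by auto
  moreover have "successively (\<lambda>x y. {x, y} \<in> E) ?cs"
    using y13 x y13Y y24 cross unfolding nbr_def by simp
  ultimately have "is_path V E ?cs" unfolding is_path_def by simp
  moreover have "{last ?cs, hd ?cs} \<in> E" using y13(2) unfolding nbr_def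
    by (simp add: insert_commute)
  ultimately have cycle: "is_cycle V E ?cs" by (rule is_cycle_if_closed_path) simp
  have "{y1, y2, y4, y3} \<subseteq> nbr E x1 \<inter> set ?cs" using x y13Y y24 cross unfolding nbr_def by auto
  moreover have "card {y1, y2, y4, y3} = 4" using y13(3) y24 by auto
  ultimately show ?thesis using two_chords_if_four_nbrs_on_cycle[OF cycle, of x1 "{y1, y2, y4, y3}"]
    by simp
qed

lemma nbr_one_side_if_bipartite:
  assumes "bipartite V E" "complete_bipartite_on W E' X" "E' \<subseteq> E" "nbr E v \<subseteq> W"
  shows "nbr E v \<subseteq> X \<or> nbr E v \<subseteq> W - X"
proof (rule ccontr)
  assume "\<not> (nbr E v \<subseteq> X \<or> nbr E v \<subseteq> W - X)"
  then obtain a b where "a \<in> nbr E v" "a \<in> X" "b \<in> nbr E v" "b \<in> W - X" using assms(4) by blast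
  moreover have "{a, b} \<in> E" using complete_bipartite_on_edge[OF assms(2)] assms(3) calculation
    by blast
  ultimately show False using bipartite_no_triangle[OF assms(1), of v a b] unfolding nbr_def
    by blast
qed

lemma complete_bipartite_extend:
  assumes "simple_graph V E" "bipartite V E" "\<not> has_cycle_two_adjacent_chords V E"
    "v \<in> V" "card (nbr E v) = 3"
    "complete_bipartite_on (V - {v}) {e \<in> E. v \<notin> e} X" "card X = 3"
  shows "\<exists>X'. complete_bipartite_on V E X' \<and> card X' = 3"
proof -
  let ?Y = "V - {v} - X" and ?N = "nbr E v"
  have fin: "finite X" "finite ?Y" using assms(7) simple_graph_finite[OF assms(1)] card.infinite
    by force+
  have "?N \<subseteq> X \<or> ?N \<subseteq> ?Y"
    using nbr_one_side_if_bipartite[OF assms(2,6)] nbr_subset[OF assms(1)] by blast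
  then consider "?N = X" | "?N \<subseteq> ?Y"
    using card_subset_eq[OF fin(1)] assms(5,7) by auto
  then show ?thesis
  proof cases
    case 1
    then show ?thesis using complete_bipartite_on_insert_vertex[OF assms(1,4,6)] assms(7) by blast
  next
    case 2
    show ?thesis
    proof (cases "card ?Y = 3")
      case True
      then have "?N = ?Y" using card_subset_eq[OF fin(2) 2] assms(5) by simp
      then show ?thesis
        using complete_bipartite_on_insert_vertex[OF assms(1,4)
            complete_bipartite_on_swap[OF assms(6)]] True
        by auto
    next
      case False
      moreover have "card ?N \<le> card ?Y" using card_mono[OF fin(2) 2] .
      ultimately have "4 \<le> card ?Y" using assms(5) by simp
      moreover have "?N - X = ?N" using 2 by blast
      ultimately have "has_cycle_two_adjacent_chords V E"
        using complete_bipartite_plus_vertex_two_chords[OF assms(1,4,6)] assms(5,7) by simp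
      then show ?thesis using assms(3) by blast
    qed
  qed
qed

lemma bipartite_six_vertices_nine_edges:
  assumes "simple_graph V E" "bipartite V E" "card V = 6" "card E = 9"
  shows "\<exists>X. complete_bipartite_on V E X \<and> card X = 3"
proof -
  obtain A B where AB: "A \<union> B = V" "A \<inter> B = {}" "E \<subseteq> cross_edges A B"
    using bipartiteE[OF assms(2)] .
  have fin: "finite A" "finite B" using AB(1) simple_graph_finite[OF assms(1)] by auto
  have "card A + card B = 6" using card_Un_disjoint[OF fin AB(2)] AB(1) assms(3) by simp
  moreover have cross: "card (cross_edges A B) = card A * card B"
    using card_cross_edges[OF fin AB(2)] .
  moreover have fin_cross: "finite (cross_edges A B)" using fin by (simp add: cross_edges_eq_image)
  ultimately have "9 \<le> card A * card B" "card A \<le> 6"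
    using card_mono[OF _ AB(3)] assms(4) by auto
  then have "card A = 3" "card B = 3" using \<open>card A + card B = 6\<close>
    by (auto simp: le_Suc_eq numeral_eq_Suc)
  then have "E = cross_edges A B" using card_subset_eq[OF fin_cross AB(3)] cross assms(4) by simp
  moreover have "B = V - A" using AB(1,2) by blast
  ultimately show ?thesis using AB(1) \<open>card A = 3\<close> unfolding complete_bipartite_on_def by blast
qed

theorem extremal_bipartite_complete:
  assumes "6 \<le> n" "simple_graph V E" "card V = n" "\<not> has_cycle_two_adjacent_chords V E"
    "bipartite V E" "card E = 3 * n - 9"
  shows "\<exists>X. complete_bipartite_on V E X \<and> card X = 3"
  using assms
proof (induction n arbitrary: V E rule: nat_induct_at_least)
  case base
  then show ?case using bipartite_six_vertices_nine_edges by simp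
next
  case (Suc n)
  have "V \<noteq> {}" using Suc.prems(2) by auto
  then obtain v where v: "v \<in> V" "card (nbr E v) \<le> 3"
    using low_degree_vertex_exists[OF Suc.prems(1) _ Suc.prems(3)] by blast
  let ?V' = "V - {v}" and ?E' = "{e \<in> E. v \<notin> e}"
  have G': "simple_graph ?V' ?E'" "card ?V' = n" "\<not> has_cycle_two_adjacent_chords ?V' ?E'"
    using simple_graph_delete_vertex[OF Suc.prems(1)] Suc.prems(2) v(1)
      simple_graph_finite[OF Suc.prems(1)] no_two_chords_delete_vertex[OF Suc.prems(3)] by simp_all
  have "card ?E' \<le> 3 * n - 9" using card_edges_le[OF Suc.hyps G'] .
  moreover have "card E = card ?E' + card (nbr E v)"
    using card_edges_delete_vertex[OF Suc.prems(1)] .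
  moreover have "3 * Suc n - 9 = (3 * n - 9) + 3" using Suc.hyps by simp
  ultimately have "card (nbr E v) = 3" "card ?E' = 3 * n - 9" using Suc.prems(5) v(2) by linarith+
  then obtain X where "complete_bipartite_on ?V' ?E' X" "card X = 3"
    using Suc.IH[OF G'(1,2,3) bipartite_delete_vertex[OF Suc.prems(4)]] by blast
  then show ?case
    using complete_bipartite_extend[OF Suc.prems(1,4,3) v(1)] \<open>card (nbr E v) = 3\<close> by blast
qed

lemma complete_bipartite_on_graph_iso:
  assumes "complete_bipartite_on V E X" "complete_bipartite_on V' E' X'" "finite V" "finite V'"
    "card X = card X'" "card V = card V'"
  shows "graph_iso V E V' E'"
proof -
  have X: "X \<subseteq> V" "X' \<subseteq> V'" and E: "E = cross_edges X (V - X)" "E' = cross_edges X' (V' - X')"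
    using assms(1,2) unfolding complete_bipartite_on_def by blast+
  have fin: "finite X" "finite X'"
    using finite_subset[OF X(1) assms(3)] finite_subset[OF X(2) assms(4)] .
  obtain f where f: "bij_betw f X X'" using finite_same_card_bij[OF fin assms(5)] by blast
  have "card (V - X) = card (V' - X')" using assms(5,6) X fin by (simp add: card_Diff_subset)
  then obtain g where g: "bij_betw g (V - X) (V' - X')"
    using finite_same_card_bij[OF finite_Diff[OF assms(3)] finite_Diff[OF assms(4)]] by blast
  define h where "h u = (if u \<in> X then f u else g u)" for u
  have "bij_betw h X X'" using f by (rule bij_betw_cong[THEN iffD1, rotated]) (simp add: h_def)
  moreover have "bij_betw h (V - X) (V' - X')"
    using g by (rule bij_betw_cong[THEN iffD1, rotated]) (simp add: h_def)
  ultimately have "bij_betw h (X \<union> (V - X)) (X' \<union> (V' - X'))" by (rule bij_betw_combine) blast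
  moreover have "X \<union> (V - X) = V" "X' \<union> (V' - X') = V'" using X by blast+
  ultimately have h: "bij_betw h V V'" by simp
  have side: "h u \<in> X' \<longleftrightarrow> u \<in> X" if "u \<in> V" for u
    using that bij_betw_apply[OF f] bij_betw_apply[OF g] unfolding h_def by auto
  have "{u, w} \<in> E \<longleftrightarrow> {h u, h w} \<in> E'" if "u \<in> V" "w \<in> V" for u w
    using that side[OF that(1)] side[OF that(2)] bij_betw_apply[OF h]
    unfolding E doubleton_in_cross_edges_iff by blast
  then show ?thesis using h unfolding graph_iso_def by blast
qed

lemma graph_iso_card_edges:
  assumes "simple_graph V E" "simple_graph V' E'" "graph_iso V E V' E'"
  shows "card E = card E'"
proof -
  obtain f where f: "bij_betw f V V'" and adj: "\<forall>u\<in>V. \<forall>w\<in>V. {u, w} \<in> E \<longleftrightarrow> {f u, f w} \<in> E'"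
    using assms(3) unfolding graph_iso_def by blast
  have "(\<lambda>e. f ` e) ` E = E'"
  proof
    show "(\<lambda>e. f ` e) ` E \<subseteq> E'"
    proof
      fix e' assume "e' \<in> (\<lambda>e. f ` e) ` E"
      then obtain e where e: "e \<in> E" "e' = f ` e" by blast
      obtain u w where uw: "e = {u, w}" using simple_graph_edgeE[OF assms(1) e(1)] by blast
      then have "u \<in> V" "w \<in> V" using e(1) simple_graph_edgeD[OF assms(1), of u w] by simp_all
      then show "e' \<in> E'" using e uw adj by simp
    qed
  next
    show "E' \<subseteq> (\<lambda>e. f ` e) ` E"
    proof
      fix e' assume "e' \<in> E'"
      then obtain a b where ab: "e' = {a, b}" using simple_graph_edgeE[OF assms(2)] by blast
      then have "a \<in> f ` V" "b \<in> f ` V"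
        using \<open>e' \<in> E'\<close> simple_graph_edgeD[OF assms(2), of a b] f unfolding bij_betw_def by simp_all
      then obtain u w where uw: "u \<in> V" "w \<in> V" "a = f u" "b = f w" by blast
      then have "{u, w} \<in> E" using adj ab \<open>e' \<in> E'\<close> by simp
      moreover have "e' = f ` {u, w}" using ab uw by simp
      ultimately show "e' \<in> (\<lambda>e. f ` e) ` E" by blast
    qed
  qed
  moreover have "inj_on (\<lambda>e. f ` e) E"
  proof (rule inj_on_subset[OF inj_on_image_Pow[OF bij_betw_imp_inj_on[OF f]]])
    show "E \<subseteq> Pow V" using assms(1) unfolding simple_graph_def by blast
  qed
  ultimately show ?thesis using card_image by metis
qed

lemma complete_bipartite_on_Kbip: "complete_bipartite_on (Kbip_V p q) (Kbip_E p q) {0..<p}"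
  unfolding complete_bipartite_on_def Kbip_V_def Kbip_E_def cross_edges_def by auto

lemma simple_graph_Kbip: "simple_graph (Kbip_V p q) (Kbip_E p q)"
  unfolding simple_graph_def Kbip_V_def Kbip_E_def by auto

lemma card_Kbip_E: "card (Kbip_E p q) = p * q"
  using complete_bipartite_on_Kbip[of p q] card_cross_edges[of "{0..<p}" "Kbip_V p q - {0..<p}"]
  unfolding complete_bipartite_on_def Kbip_V_def by auto

theorem lemma4p1:
  fixes V :: "'a set" and E :: "'a set set" and n :: nat
  assumes "simple_graph V E"
    and "card V = n"
    and "n \<ge> 6"
    and "\<not> has_cycle_two_adjacent_chords V E"
  shows "card E \<le> 3 * n - 9 \<and> (bipartite V E \<longrightarrow>
           (card E = 3 * n - 9 \<longleftrightarrow> graph_iso V E (Kbip_V 3 (n - 3)) (Kbip_E 3 (n - 3))))"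
proof -
  have bound: "card E \<le> 3 * n - 9" using card_edges_le[OF assms(3,1,2,4)] .
  have "card E = 3 * n - 9 \<longleftrightarrow> graph_iso V E (Kbip_V 3 (n - 3)) (Kbip_E 3 (n - 3))"
    if bip: "bipartite V E"
  proof
    assume "card E = 3 * n - 9"
    then obtain X where X: "complete_bipartite_on V E X" "card X = 3"
      using extremal_bipartite_complete[OF assms(3,1,2,4) bip] by blast
    have "card V = card (Kbip_V 3 (n - 3))" using assms(2,3) by (simp add: Kbip_V_def)
    then show "graph_iso V E (Kbip_V 3 (n - 3)) (Kbip_E 3 (n - 3))"
      using complete_bipartite_on_graph_iso[OF X(1) complete_bipartite_on_Kbip
        simple_graph_finite[OF assms(1)]]
        X(2) by (simp add: Kbip_V_def)
  next
    assume "graph_iso V E (Kbip_V 3 (n - 3)) (Kbip_E 3 (n - 3))"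
    then have "card E = card (Kbip_E 3 (n - 3))"
      by (rule graph_iso_card_edges[OF assms(1) simple_graph_Kbip])
    then show "card E = 3 * n - 9" by (simp add: card_Kbip_E)
  qed
  with bound show ?thesis by blast
qed

end
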